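(* Let $(H,\mu_H,\Delta_H,\alpha_H)$ be a Hom-bialgebra, $(A,\mu_A,\alpha_A)$ a left $H$-module Hom-algebra with action $h\otimes a\mapsto h\cdot a$, and $(C,\mu_C,\alpha_C)$ a right $H$-module Hom-algebra with action $c\otimes h\mapsto c\cdot h$, with $\alpha_H,\alpha_A,\alpha_C$ bijective. Consider the Hom-twisting maps $R_1:H\otimes A\to A\otimes H$, $R_1(h\otimes a)=\alpha_H^{-2}(h_1)\cdot\alpha_A^{-1}(a)\otimes\alpha_H^{-1}(h_2)$, $R_2:C\otimes H\to H\otimes C$, $R_2(c\otimes h)=\alpha_H^{-1}(h_1)\otimes\alpha_C^{-1}(c)\cdot\alpha_H^{-2}(h_2)$, and $R_3:C\otimes A\to A\otimes C$, $R_3(c\otimes a)=a\otimes c$. Then $(\mathrm{id}_A\otimes R_2)\circ(R_3\otimes\mathrm{id}_H)\circ(\mathrm{id}_C\otimes R_1)=(R_1\otimes\mathrm{id}_C)\circ(\mathrm{id}_H\otimes R_3)\circ(R_2\otimes\mathrm{id}_A)$; consequently the iterated Hom-twisted tensor product $A\# H\# C:=A\otimes_{R_1}H\otimes_{R_2}C$ is a Hom-associative algebra on $A\otimes H\otimes C$ with structure map $\alpha_A\otimes\alpha_H\otimes\alpha_C$ and multiplication $(a\# h\# c)(a'\# h'\# c')=a(\alpha_H^{-2}(h_1)\cdot\alpha_A^{-1}(a'))\#\alpha_H^{-1}(h_2h'_1)\#(\alpha_C^{-1}(c)\cdot\alpha_H^{-2}(h'_2))c'$.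
   Context: Over a field $k$, no (co)units; $\Delta(h)=h_1\otimes h_2$. Hom-associative algebra $(A,\mu,\alpha)$: $\alpha(aa')=\alpha(a)\alpha(a')$, $\alpha(a)(a'a'')=(aa')\alpha(a'')$. Hom-bialgebra $(H,\mu,\Delta,\alpha)$: $(H,\mu,\alpha)$ Hom-associative, $\Delta(h_1)\otimes\alpha(h_2)=\alpha(h_1)\otimes\Delta(h_2)$, $\Delta(hh')=h_1h'_1\otimes h_2h'_2$, $\Delta(\alpha(h))=\alpha(h_1)\otimes\alpha(h_2)$. Left $H$-module Hom-algebra: Hom-associative $(A,\mu_A,\alpha_A)$ with action satisfying $\alpha_A(h\cdot a)=\alpha_H(h)\cdot\alpha_A(a)$, $\alpha_H(h)\cdot(h'\cdot a)=(hh')\cdot\alpha_A(a)$, $\alpha_H^2(h)\cdot(aa')=(h_1\cdot a)(h_2\cdot a')$. Right $H$-module Hom-algebra: Hom-associative $(C,\mu_C,\alpha_C)$ with action satisfying $\alpha_C(c\cdot h)=\alpha_C(c)\cdot\alpha_H(h)$, $(c\cdot h)\cdot\alpha_H(h')=\alpha_C(c)\cdot(hh')$, $(cc')\cdot\alpha_H^2(h)=(c\cdot h_1)(c'\cdot h_2)$. A Hom-twisting map between Hom-associative $A$ and $B$ is linear $R:B\otimes A\to A\otimes B$ with $(\alpha_A\otimes\alpha_B)\circ R=R\circ(\alpha_B\otimes\alpha_A)$, $R\circ(\alpha_B\otimes\mu_A)=(\mu_A\otimes\alpha_B)\circ(\mathrm{id}\otimes R)\circ(R\otimes\mathrm{id})$,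 $R\circ(\mu_B\otimes\alpha_A)=(\alpha_A\otimes\mu_B)\circ(R\otimes\mathrm{id})\circ(\mathrm{id}\otimes R)$ ($R_1,R_2,R_3$ above are such maps). Given Hom-twisting maps $R_1:B\otimes A\to A\otimes B$, $R_2:C\otimes B\to B\otimes C$, $R_3:C\otimes A\to A\otimes C$ satisfying the braid relation, the iterated Hom-twisted tensor product $A\otimes_{R_1}B\otimes_{R_2}C$ is $A\otimes B\otimes C$ with structure map $\alpha_A\otimes\alpha_B\otimes\alpha_C$ and product $(a\otimes b\otimes c)(a'\otimes b'\otimes c')=a(a'_{R_3})_{R_1}\otimes b_{R_1}b'_{R_2}\otimes(c_{R_3})_{R_2}c'$, where $R_i(y\otimes x)=x_{R_i}\otimes y_{R_i}$. *)

theory Defs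
  imports "HOL-Library.Poly_Mapping"
begin

(* 
A vector space over the field 'k is modelled as the free vector space
on a basis indexed by a type 'i, i.e. finitely supported functions 'i \<Rightarrow>\<^sub>0 'k
(every vector space has a basis, so this loses no generality).  The tensor product
of the spaces with bases 'i and 'j is the free space on 'i \<times> 'j, and
x \<otimes> y is given by the product of coordinates.
Threefold tensor products are bracketed explicitly and the associativity
isomorphisms asl / asr are written out.
 *)

definition vscale :: "'k::field \<Rightarrow> ('i \<Rightarrow>\<^sub>0 'k) \<Rightarrow> ('i \<Rightarrow>\<^sub>0 'k)" where
  "vscale c x = Poly_Mapping.map (\<lambda>v. c * v) x"

definition bvec :: "'i \<Rightarrow> ('i \<Rightarrow>\<^sub>0 'k::field)" where
  "bvec i = Poly_Mapping.single i 1"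

definition lin :: "(('i \<Rightarrow>\<^sub>0 'k::field) \<Rightarrow> ('j \<Rightarrow>\<^sub>0 'k)) \<Rightarrow> bool" where
  "lin f \<longleftrightarrow> (\<forall>x y. f (x + y) = f x + f y) \<and> (\<forall>c x. f (vscale c x) = vscale c (f x))"

definition tens :: "('i \<Rightarrow>\<^sub>0 'k::field) \<Rightarrow> ('j \<Rightarrow>\<^sub>0 'k) \<Rightarrow> (('i \<times> 'j) \<Rightarrow>\<^sub>0 'k)" where
  "tens x y = (\<Sum>i\<in>Poly_Mapping.keys x. \<Sum>j\<in>Poly_Mapping.keys y. Poly_Mapping.single (i, j) (Poly_Mapping.lookup x i * Poly_Mapping.lookup y j))"

(* The linear map on X \<otimes> Y induced by a (bilinear) map F, i.e.
  bilin_ext F (\<Sum> x_i \<otimes> y_i) = \<Sum> F x_i y_i; used also for Sweedler notation: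
  bilin_ext (\<lambda>h1 h2. G h1 h2) (\<Delta> h) = G(h_1, h_2). *)
definition bilin_ext :: "(('i \<Rightarrow>\<^sub>0 'k::field) \<Rightarrow> ('j \<Rightarrow>\<^sub>0 'k) \<Rightarrow> ('r \<Rightarrow>\<^sub>0 'k))
    \<Rightarrow> (('i \<times> 'j) \<Rightarrow>\<^sub>0 'k) \<Rightarrow> ('r \<Rightarrow>\<^sub>0 'k)" where
  "bilin_ext F z = (\<Sum>p\<in>Poly_Mapping.keys z. vscale (Poly_Mapping.lookup z p) (F (bvec (fst p)) (bvec (snd p))))"

definition tmap :: "(('i \<Rightarrow>\<^sub>0 'k::field) \<Rightarrow> ('i2 \<Rightarrow>\<^sub>0 'k)) \<Rightarrow> (('j \<Rightarrow>\<^sub>0 'k) \<Rightarrow> ('j2 \<Rightarrow>\<^sub>0 'k))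
    \<Rightarrow> (('i \<times> 'j) \<Rightarrow>\<^sub>0 'k) \<Rightarrow> (('i2 \<times> 'j2) \<Rightarrow>\<^sub>0 'k)" where
  "tmap f g = bilin_ext (\<lambda>x y. tens (f x) (g y))"

definition asl :: "(('a \<times> ('b \<times> 'c)) \<Rightarrow>\<^sub>0 'k::field) \<Rightarrow> ((('a \<times> 'b) \<times> 'c) \<Rightarrow>\<^sub>0 'k)" where
  "asl = bilin_ext (\<lambda>x yz. bilin_ext (\<lambda>y z. tens (tens x y) z) yz)"

definition asr :: "((('a \<times> 'b) \<times> 'c) \<Rightarrow>\<^sub>0 'k::field) \<Rightarrow> (('a \<times> ('b \<times> 'c)) \<Rightarrow>\<^sub>0 'k)" where
  "asr = bilin_ext (\<lambda>xy z. bilin_ext (\<lambda>x y. tens x (tens y z)) xy)"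

definition hom_assoc :: "((('a \<times> 'a) \<Rightarrow>\<^sub>0 'k::field) \<Rightarrow> ('a \<Rightarrow>\<^sub>0 'k)) \<Rightarrow> (('a \<Rightarrow>\<^sub>0 'k) \<Rightarrow> ('a \<Rightarrow>\<^sub>0 'k)) \<Rightarrow> bool" where
  "hom_assoc mu al \<longleftrightarrow> lin mu \<and> lin al \<and>
     (\<forall>x y. al (mu (tens x y)) = mu (tens (al x) (al y))) \<and>
     (\<forall>x y z. mu (tens (al x) (mu (tens y z))) = mu (tens (mu (tens x y)) (al z)))"

(* Hom-bialgebra (H, \<mu>, \<Delta>, \<alpha>) (no unit, no counit). *)
definition hom_bialgebra :: "((('h \<times> 'h) \<Rightarrow>\<^sub>0 'k::field) \<Rightarrow> ('h \<Rightarrow>\<^sub>0 'k)) \<Rightarrow> (('h \<Rightarrow>\<^sub>0 'k) \<Rightarrow> (('h \<times> 'h) \<Rightarrow>\<^sub>0 'k))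
    \<Rightarrow> (('h \<Rightarrow>\<^sub>0 'k) \<Rightarrow> ('h \<Rightarrow>\<^sub>0 'k)) \<Rightarrow> bool" where
  "hom_bialgebra mu Delta al \<longleftrightarrow> hom_assoc mu al \<and> lin Delta \<and>
     (\<forall>h. bilin_ext (\<lambda>h1 h2. tens (Delta h1) (al h2)) (Delta h)
          = asl (bilin_ext (\<lambda>h1 h2. tens (al h1) (Delta h2)) (Delta h))) \<and>
     (\<forall>h h'. Delta (mu (tens h h')) =
          bilin_ext (\<lambda>h1 h2. bilin_ext (\<lambda>h1' h2'. tens (mu (tens h1 h1')) (mu (tens h2 h2'))) (Delta h')) (Delta h)) \<and>
     (\<forall>h. Delta (al h) = bilin_ext (\<lambda>h1 h2. tens (al h1) (al h2)) (Delta h))"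

definition left_module_hom_algebra ::
  "((('h \<times> 'h) \<Rightarrow>\<^sub>0 'k::field) \<Rightarrow> ('h \<Rightarrow>\<^sub>0 'k)) \<Rightarrow> (('h \<Rightarrow>\<^sub>0 'k) \<Rightarrow> (('h \<times> 'h) \<Rightarrow>\<^sub>0 'k)) \<Rightarrow> (('h \<Rightarrow>\<^sub>0 'k) \<Rightarrow> ('h \<Rightarrow>\<^sub>0 'k))
   \<Rightarrow> ((('a \<times> 'a) \<Rightarrow>\<^sub>0 'k) \<Rightarrow> ('a \<Rightarrow>\<^sub>0 'k)) \<Rightarrow> (('a \<Rightarrow>\<^sub>0 'k) \<Rightarrow> ('a \<Rightarrow>\<^sub>0 'k))
   \<Rightarrow> ((('h \<times> 'a) \<Rightarrow>\<^sub>0 'k) \<Rightarrow> ('a \<Rightarrow>\<^sub>0 'k)) \<Rightarrow> bool" where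
  "left_module_hom_algebra muH DeltaH alH muA alA act \<longleftrightarrow> hom_assoc muA alA \<and> lin act \<and>
     (\<forall>h a. alA (act (tens h a)) = act (tens (alH h) (alA a))) \<and>
     (\<forall>h h' a. act (tens (alH h) (act (tens h' a))) = act (tens (muH (tens h h')) (alA a))) \<and>
     (\<forall>h a a'. act (tens (alH (alH h)) (muA (tens a a')))
          = bilin_ext (\<lambda>h1 h2. muA (tens (act (tens h1 a)) (act (tens h2 a')))) (DeltaH h))"

definition right_module_hom_algebra ::
  "((('h \<times> 'h) \<Rightarrow>\<^sub>0 'k::field) \<Rightarrow> ('h \<Rightarrow>\<^sub>0 'k)) \<Rightarrow> (('h \<Rightarrow>\<^sub>0 'k) \<Rightarrow> (('h \<times> 'h) \<Rightarrow>\<^sub>0 'k)) \<Rightarrow> (('h \<Rightarrow>\<^sub>0 'k) \<Rightarrow> ('h \<Rightarrow>\<^sub>0 'k))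
   \<Rightarrow> ((('c \<times> 'c) \<Rightarrow>\<^sub>0 'k) \<Rightarrow> ('c \<Rightarrow>\<^sub>0 'k)) \<Rightarrow> (('c \<Rightarrow>\<^sub>0 'k) \<Rightarrow> ('c \<Rightarrow>\<^sub>0 'k))
   \<Rightarrow> ((('c \<times> 'h) \<Rightarrow>\<^sub>0 'k) \<Rightarrow> ('c \<Rightarrow>\<^sub>0 'k)) \<Rightarrow> bool" where
  "right_module_hom_algebra muH DeltaH alH muC alC act \<longleftrightarrow> hom_assoc muC alC \<and> lin act \<and>
     (\<forall>c h. alC (act (tens c h)) = act (tens (alC c) (alH h))) \<and>
     (\<forall>c h h'. act (tens (act (tens c h)) (alH h')) = act (tens (alC c) (muH (tens h h')))) \<and>
     (\<forall>c c' h. act (tens (muC (tens c c')) (alH (alH h)))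
          = bilin_ext (\<lambda>h1 h2. muC (tens (act (tens c h1)) (act (tens c' h2)))) (DeltaH h))"

definition hom_twisting ::
  "((('a \<times> 'a) \<Rightarrow>\<^sub>0 'k::field) \<Rightarrow> ('a \<Rightarrow>\<^sub>0 'k)) \<Rightarrow> (('a \<Rightarrow>\<^sub>0 'k) \<Rightarrow> ('a \<Rightarrow>\<^sub>0 'k))
   \<Rightarrow> ((('b \<times> 'b) \<Rightarrow>\<^sub>0 'k) \<Rightarrow> ('b \<Rightarrow>\<^sub>0 'k)) \<Rightarrow> (('b \<Rightarrow>\<^sub>0 'k) \<Rightarrow> ('b \<Rightarrow>\<^sub>0 'k))
   \<Rightarrow> ((('b \<times> 'a) \<Rightarrow>\<^sub>0 'k) \<Rightarrow> (('a \<times> 'b) \<Rightarrow>\<^sub>0 'k)) \<Rightarrow> bool" where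
  "hom_twisting muA alA muB alB R \<longleftrightarrow> lin R \<and>
     (\<forall>z. tmap alA alB (R z) = R (tmap alB alA z)) \<and>
     (\<forall>z. R (tmap alB muA (asr z)) = tmap muA alB (asl (tmap id R (asr (tmap R id z))))) \<and>
     (\<forall>z. R (tmap muB alA (asl z)) = tmap alA muB (asr (tmap R id (asl (tmap id R z)))))"

(* Product of the iterated Hom-twisted tensor product A \<otimes>_{R1} B \<otimes>_{R2} C on
  A \<otimes> (B \<otimes> C): (a\<otimes>b\<otimes>c)(a'\<otimes>b'\<otimes>c') = a (a'_{R3})_{R1} \<otimes> b_{R1} b'_{R2} \<otimes> (c_{R3})_{R2} c'. *)
definition tri_ext :: "(('a \<Rightarrow>\<^sub>0 'k::field) \<Rightarrow> ('b \<Rightarrow>\<^sub>0 'k) \<Rightarrow> ('c \<Rightarrow>\<^sub>0 'k) \<Rightarrow> ('r \<Rightarrow>\<^sub>0 'k))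
    \<Rightarrow> (('a \<times> ('b \<times> 'c)) \<Rightarrow>\<^sub>0 'k) \<Rightarrow> ('r \<Rightarrow>\<^sub>0 'k)" where
  "tri_ext F = bilin_ext (\<lambda>a bc. bilin_ext (\<lambda>b c. F a b c) bc)"

definition iter_twisted_mult ::
  "((('a \<times> 'a) \<Rightarrow>\<^sub>0 'k::field) \<Rightarrow> ('a \<Rightarrow>\<^sub>0 'k)) \<Rightarrow> ((('b \<times> 'b) \<Rightarrow>\<^sub>0 'k) \<Rightarrow> ('b \<Rightarrow>\<^sub>0 'k)) \<Rightarrow> ((('c \<times> 'c) \<Rightarrow>\<^sub>0 'k) \<Rightarrow> ('c \<Rightarrow>\<^sub>0 'k))
   \<Rightarrow> ((('b \<times> 'a) \<Rightarrow>\<^sub>0 'k) \<Rightarrow> (('a \<times> 'b) \<Rightarrow>\<^sub>0 'k)) \<Rightarrow> ((('c \<times> 'b) \<Rightarrow>\<^sub>0 'k) \<Rightarrow> (('b \<times> 'c) \<Rightarrow>\<^sub>0 'k))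
   \<Rightarrow> ((('c \<times> 'a) \<Rightarrow>\<^sub>0 'k) \<Rightarrow> (('a \<times> 'c) \<Rightarrow>\<^sub>0 'k))
   \<Rightarrow> ((('a \<times> ('b \<times> 'c)) \<times> ('a \<times> ('b \<times> 'c))) \<Rightarrow>\<^sub>0 'k) \<Rightarrow> (('a \<times> ('b \<times> 'c)) \<Rightarrow>\<^sub>0 'k)" where
  "iter_twisted_mult muA muB muC R1 R2 R3 = bilin_ext (\<lambda>x y.
     tri_ext (\<lambda>a b c. tri_ext (\<lambda>a' b' c'.
       bilin_ext (\<lambda>a'3 c3.
         bilin_ext (\<lambda>a'31 b1.
           bilin_ext (\<lambda>b'2 c32. tens (muA (tens a a'31)) (tens (muB (tens b1 b'2)) (muC (tens c32 c'))))
             (R2 (tens c3 b')))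
           (R1 (tens b a'3)))
         (R3 (tens c a'))) y) x)"

definition smash_R1 :: "(('h \<Rightarrow>\<^sub>0 'k::field) \<Rightarrow> (('h \<times> 'h) \<Rightarrow>\<^sub>0 'k)) \<Rightarrow> (('h \<Rightarrow>\<^sub>0 'k) \<Rightarrow> ('h \<Rightarrow>\<^sub>0 'k))
   \<Rightarrow> (('a \<Rightarrow>\<^sub>0 'k) \<Rightarrow> ('a \<Rightarrow>\<^sub>0 'k)) \<Rightarrow> ((('h \<times> 'a) \<Rightarrow>\<^sub>0 'k) \<Rightarrow> ('a \<Rightarrow>\<^sub>0 'k))
   \<Rightarrow> (('h \<times> 'a) \<Rightarrow>\<^sub>0 'k) \<Rightarrow> (('a \<times> 'h) \<Rightarrow>\<^sub>0 'k)" where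
  "smash_R1 DeltaH alH alA act = bilin_ext (\<lambda>h a.
     bilin_ext (\<lambda>h1 h2. tens (act (tens (inv alH (inv alH h1)) (inv alA a))) (inv alH h2)) (DeltaH h))"

definition smash_R2 :: "(('h \<Rightarrow>\<^sub>0 'k::field) \<Rightarrow> (('h \<times> 'h) \<Rightarrow>\<^sub>0 'k)) \<Rightarrow> (('h \<Rightarrow>\<^sub>0 'k) \<Rightarrow> ('h \<Rightarrow>\<^sub>0 'k))
   \<Rightarrow> (('c \<Rightarrow>\<^sub>0 'k) \<Rightarrow> ('c \<Rightarrow>\<^sub>0 'k)) \<Rightarrow> ((('c \<times> 'h) \<Rightarrow>\<^sub>0 'k) \<Rightarrow> ('c \<Rightarrow>\<^sub>0 'k))
   \<Rightarrow> (('c \<times> 'h) \<Rightarrow>\<^sub>0 'k) \<Rightarrow> (('h \<times> 'c) \<Rightarrow>\<^sub>0 'k)" where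
  "smash_R2 DeltaH alH alC act = bilin_ext (\<lambda>c h.
     bilin_ext (\<lambda>h1 h2. tens (inv alH h1) (act (tens (inv alC c) (inv alH (inv alH h2))))) (DeltaH h))"

definition flip_R :: "(('c \<times> 'a) \<Rightarrow>\<^sub>0 'k::field) \<Rightarrow> (('a \<times> 'c) \<Rightarrow>\<^sub>0 'k)" where
  "flip_R = bilin_ext (\<lambda>c a. tens a c)"

definition two_sided_smash_mult ::
  "((('h \<times> 'h) \<Rightarrow>\<^sub>0 'k::field) \<Rightarrow> ('h \<Rightarrow>\<^sub>0 'k)) \<Rightarrow> (('h \<Rightarrow>\<^sub>0 'k) \<Rightarrow> (('h \<times> 'h) \<Rightarrow>\<^sub>0 'k)) \<Rightarrow> (('h \<Rightarrow>\<^sub>0 'k) \<Rightarrow> ('h \<Rightarrow>\<^sub>0 'k))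
   \<Rightarrow> ((('a \<times> 'a) \<Rightarrow>\<^sub>0 'k) \<Rightarrow> ('a \<Rightarrow>\<^sub>0 'k)) \<Rightarrow> (('a \<Rightarrow>\<^sub>0 'k) \<Rightarrow> ('a \<Rightarrow>\<^sub>0 'k)) \<Rightarrow> ((('h \<times> 'a) \<Rightarrow>\<^sub>0 'k) \<Rightarrow> ('a \<Rightarrow>\<^sub>0 'k))
   \<Rightarrow> ((('c \<times> 'c) \<Rightarrow>\<^sub>0 'k) \<Rightarrow> ('c \<Rightarrow>\<^sub>0 'k)) \<Rightarrow> (('c \<Rightarrow>\<^sub>0 'k) \<Rightarrow> ('c \<Rightarrow>\<^sub>0 'k)) \<Rightarrow> ((('c \<times> 'h) \<Rightarrow>\<^sub>0 'k) \<Rightarrow> ('c \<Rightarrow>\<^sub>0 'k))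
   \<Rightarrow> ((('a \<times> ('h \<times> 'c)) \<times> ('a \<times> ('h \<times> 'c))) \<Rightarrow>\<^sub>0 'k) \<Rightarrow> (('a \<times> ('h \<times> 'c)) \<Rightarrow>\<^sub>0 'k)" where
  "two_sided_smash_mult muH DeltaH alH muA alA actA muC alC actC = bilin_ext (\<lambda>x y.
     tri_ext (\<lambda>a h c. tri_ext (\<lambda>a' h' c'.
       bilin_ext (\<lambda>h1 h2. bilin_ext (\<lambda>h1' h2'.
         tens (muA (tens a (actA (tens (inv alH (inv alH h1)) (inv alA a')))))
          (tens (inv alH (muH (tens h2 h1')))
                (muC (tens (actC (tens (inv alC c) (inv alH (inv alH h2')))) c'))))
         (DeltaH h')) (DeltaH h)) y) x)"

end

theory Submission
  imports Defs
begin

text \<open>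
  Every identity involved is multilinear, so it suffices to check it on basis vectors, where both
  sides unfold into nested Sweedler sums. For the smash maps R1 and R2 the twisting axioms then
  follow from the module Hom-algebra axioms and multiplicativity of \<open>\<Delta>\<close>, together with
  Hom-coassociativity, which moves \<open>\<alpha>\<^sub>H\<close> from the last to the first leg of a threefold
  Sweedler sum; the braid relation with the flip R3 needs one such use of Hom-coassociativity.

  Hom-associativity of \<open>A \<otimes>\<^bsub>R1\<^esub> B \<otimes>\<^bsub>R2\<^esub> C\<close> holds for any Hom-twisting maps R1, R2
  obeying the braid relation with the flip: rewriting both sides of the associativity law with the
  twisting axioms yields two nested sums that agree up to the order of summation and a single
  application of the braid relation. Specialising to the smash maps and unfolding gives the
  explicit multiplication.
\<close>

section \<open>Linear algebra of free vector spaces\<close>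

lemma lookup_vscale[simp]: "Poly_Mapping.lookup (vscale c x) i = c * Poly_Mapping.lookup x i"
  by (simp add: vscale_def Poly_Mapping.map.rep_eq when_def)

lemma vscale_add_right: "vscale c (x + y) = vscale c x + vscale c y"
  by (rule poly_mapping_eqI) (simp add: lookup_add algebra_simps)
lemma vscale_add_left: "vscale (c + d) x = vscale c x + vscale d x"
  by (rule poly_mapping_eqI) (simp add: lookup_add algebra_simps)
lemma vscale_vscale[simp]: "vscale c (vscale d x) = vscale (c*d) x"
  by (rule poly_mapping_eqI) (simp add: algebra_simps)
lemma vscale_0[simp]: "vscale 0 x = 0" "vscale c 0 = 0"
  by (rule poly_mapping_eqI; simp)+
lemma vscale_1[simp]: "vscale 1 x = x"
  by (rule poly_mapping_eqI; simp)
lemma vscale_sum: "vscale c (sum f S) = (\<Sum>s\<in>S. vscale c (f s))"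
  by (rule poly_mapping_eqI) (simp add: lookup_sum sum_distrib_left)

lemma lookup_bvec: "Poly_Mapping.lookup (bvec i) j = (if i = j then 1 else 0)"
  by (simp add: bvec_def lookup_single)

lemma vec_eq_sum_bvec: "x = (\<Sum>i\<in>Poly_Mapping.keys x. vscale (Poly_Mapping.lookup x i) (bvec i))"
proof (rule poly_mapping_eqI)
  fix k
  have "(\<Sum>i\<in>Poly_Mapping.keys x. Poly_Mapping.lookup x i * (if i = k then 1 else 0)) = (\<Sum>i\<in>Poly_Mapping.keys x. if i = k then Poly_Mapping.lookup x i else 0)"
    by (rule sum.cong) auto
  also have "\<dots> = Poly_Mapping.lookup x k" by (simp add: sum.delta in_keys_iff)
  finally show "Poly_Mapping.lookup x k = Poly_Mapping.lookup (\<Sum>i\<in>Poly_Mapping.keys x. vscale (Poly_Mapping.lookup x i) (bvec i)) k"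
    by (simp add: lookup_sum lookup_bvec)
qed

lemma lin_add: "lin f \<Longrightarrow> f (x + y) = f x + f y" by (simp add: lin_def)
lemma lin_vscale: "lin f \<Longrightarrow> f (vscale c x) = vscale c (f x)" by (simp add: lin_def)
lemma lin_zero: "lin f \<Longrightarrow> f 0 = 0"
  using lin_vscale[of f 0 0] by simp
lemma lin_sum: "lin f \<Longrightarrow> f (sum g S) = (\<Sum>s\<in>S. f (g s))"
  by (induction S rule: infinite_finite_induct) (auto simp: lin_zero lin_add)
lemma lin_eq_sum_bvec: "lin f \<Longrightarrow> f x = (\<Sum>i\<in>Poly_Mapping.keys x. vscale (Poly_Mapping.lookup x i) (f (bvec i)))"
proof -
  assume l: "lin f"
  have "f x = f (\<Sum>i\<in>Poly_Mapping.keys x. vscale (Poly_Mapping.lookup x i) (bvec i))"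
    using vec_eq_sum_bvec[of x] by (rule arg_cong)
  then show ?thesis using l by (simp add: lin_sum lin_vscale)
qed

lemma lin_eqI: "lin f \<Longrightarrow> lin g \<Longrightarrow> (\<And>i. f (bvec i) = g (bvec i)) \<Longrightarrow> f = g"
proof (rule ext)
  fix x assume a: "lin f" "lin g" "\<And>i. f (bvec i) = g (bvec i)"
  show "f x = g x" using lin_eq_sum_bvec[OF a(1), of x] lin_eq_sum_bvec[OF a(2), of x] a(3) by simp
qed

lemma lookup_tens: "Poly_Mapping.lookup (tens x y) (i, j) = Poly_Mapping.lookup x i * Poly_Mapping.lookup y j"
proof -
  have "Poly_Mapping.lookup (tens x y) (i, j) = (\<Sum>i'\<in>Poly_Mapping.keys x. \<Sum>j'\<in>Poly_Mapping.keys y. (if (i',j') = (i,j) then Poly_Mapping.lookup x i' * Poly_Mapping.lookup y j' else 0))"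
    by (simp add: tens_def lookup_sum lookup_single when_def)
  also have "\<dots> = Poly_Mapping.lookup x i * Poly_Mapping.lookup y j"
  proof -
    have "(\<Sum>i'\<in>Poly_Mapping.keys x. \<Sum>j'\<in>Poly_Mapping.keys y. (if (i',j') = (i,j) then Poly_Mapping.lookup x i' * Poly_Mapping.lookup y j' else 0))
       = (\<Sum>i'\<in>Poly_Mapping.keys x. if i' = i then (\<Sum>j'\<in>Poly_Mapping.keys y. if j' = j then Poly_Mapping.lookup x i * Poly_Mapping.lookup y j else 0) else 0)"
      by (rule sum.cong) auto
    then show ?thesis by (simp add: sum.delta in_keys_iff)
  qed
  finally show ?thesis .
qed

lemma lookup_tens_pair: "Poly_Mapping.lookup (tens x y) p = Poly_Mapping.lookup x (fst p) * Poly_Mapping.lookup y (snd p)"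
  using lookup_tens[of x y "fst p" "snd p"] by simp

lemma tens_add_left: "tens (x + x') y = tens x y + tens x' y"
  by (rule poly_mapping_eqI) (simp add: lookup_tens_pair lookup_add algebra_simps)
lemma tens_add_right: "tens x (y + y') = tens x y + tens x y'"
  by (rule poly_mapping_eqI) (simp add: lookup_tens_pair lookup_add algebra_simps)
lemma tens_vscale_left: "tens (vscale c x) y = vscale c (tens x y)"
  by (rule poly_mapping_eqI) (simp add: lookup_tens_pair algebra_simps)
lemma tens_vscale_right: "tens x (vscale c y) = vscale c (tens x y)"
  by (rule poly_mapping_eqI) (simp add: lookup_tens_pair algebra_simps)
lemma tens_bvec[simp]: "tens (bvec i) (bvec j) = bvec (i, j)"
  by (rule poly_mapping_eqI) (auto simp: lookup_tens_pair lookup_bvec)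

lemma lin_tens_left: "lin (\<lambda>x. tens x y)" by (simp add: lin_def tens_add_left tens_vscale_left)
lemma lin_tens_right: "lin (\<lambda>y. tens x y)" by (simp add: lin_def tens_add_right tens_vscale_right)

lemma bilin_ext_sum_superset:
  assumes "finite S" "Poly_Mapping.keys z \<subseteq> S"
  shows "bilin_ext F z = (\<Sum>p\<in>S. vscale (Poly_Mapping.lookup z p) (F (bvec (fst p)) (bvec (snd p))))"
  unfolding bilin_ext_def
  by (rule sum.mono_neutral_left) (use assms in \<open>auto simp: in_keys_iff\<close>)

lemma lin_bilin_ext: "lin (bilin_ext F)"
proof -
  have add: "bilin_ext F (x + y) = bilin_ext F x + bilin_ext F y" for x y
  proof -
    let ?S = "Poly_Mapping.keys x \<union> Poly_Mapping.keys y"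
    have "Poly_Mapping.keys (x+y) \<subseteq> ?S" by (rule keys_add)
    then show ?thesis
      by (simp add: bilin_ext_sum_superset[of ?S] lookup_add vscale_add_left sum.distrib)
  qed
  have "bilin_ext F (vscale c x) = vscale c (bilin_ext F x)" for c x
  proof -
    have "Poly_Mapping.keys (vscale c x) \<subseteq> Poly_Mapping.keys x" by (auto simp: in_keys_iff)
    then show ?thesis
      by (simp add: bilin_ext_sum_superset[of "Poly_Mapping.keys x"] vscale_sum)
  qed
  with add show ?thesis by (simp add: lin_def)
qed

lemma bilin_ext_bvec[simp]: "bilin_ext F (bvec (i, j)) = F (bvec i) (bvec j)"
  by (simp add: bilin_ext_def bvec_def)

lemma lin_bilin_ext_commute: assumes l: "lin L" shows "L (bilin_ext F z) = bilin_ext (\<lambda>x y. L (F x y)) z"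
  unfolding bilin_ext_def by (simp only: lin_sum[OF l] lin_vscale[OF l])

lemma bilin_ext_cong: "(\<And>i j. F (bvec i) (bvec j) = G (bvec i) (bvec j)) \<Longrightarrow> bilin_ext F z = bilin_ext G z"
  by (simp add: bilin_ext_def)

lemma bilin_ext_swap:
  "bilin_ext (\<lambda>x y. bilin_ext (\<lambda>u v. F x y u v) w) z = bilin_ext (\<lambda>u v. bilin_ext (\<lambda>x y. F x y u v) z) w"
proof -
  have "bilin_ext (\<lambda>x y. bilin_ext (\<lambda>u v. F x y u v) w) z =
     (\<Sum>p\<in>Poly_Mapping.keys z. \<Sum>q\<in>Poly_Mapping.keys w. vscale (Poly_Mapping.lookup z p * Poly_Mapping.lookup w q) (F (bvec (fst p)) (bvec (snd p)) (bvec (fst q)) (bvec (snd q))))"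
    unfolding bilin_ext_def by (simp only: vscale_sum vscale_vscale)
  also have "\<dots> = (\<Sum>q\<in>Poly_Mapping.keys w. \<Sum>p\<in>Poly_Mapping.keys z. vscale (Poly_Mapping.lookup w q * Poly_Mapping.lookup z p) (F (bvec (fst p)) (bvec (snd p)) (bvec (fst q)) (bvec (snd q))))"
    by (subst sum.swap) (simp only: mult.commute)
  also have "\<dots> = bilin_ext (\<lambda>u v. bilin_ext (\<lambda>x y. F x y u v) z) w"
    unfolding bilin_ext_def by (simp only: vscale_sum vscale_vscale)
  finally show ?thesis .
qed

definition lin2 :: "(('i \<Rightarrow>\<^sub>0 'k::field) \<Rightarrow> ('j \<Rightarrow>\<^sub>0 'k) \<Rightarrow> ('r \<Rightarrow>\<^sub>0 'k)) \<Rightarrow> bool" where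
  "lin2 F \<longleftrightarrow> (\<forall>y. lin (\<lambda>x. F x y)) \<and> (\<forall>x. lin (F x))"

definition lin3 :: "(('i \<Rightarrow>\<^sub>0 'k::field) \<Rightarrow> ('j \<Rightarrow>\<^sub>0 'k) \<Rightarrow> ('l \<Rightarrow>\<^sub>0 'k) \<Rightarrow> ('r \<Rightarrow>\<^sub>0 'k)) \<Rightarrow> bool" where
  "lin3 F \<longleftrightarrow> (\<forall>y z. lin (\<lambda>x. F x y z)) \<and> (\<forall>x z. lin (\<lambda>y. F x y z)) \<and> (\<forall>x y. lin (F x y))"

lemma lin_bilin_ext_tens_left: "lin (\<lambda>x. bilin_ext F (tens x y))"
  using lin_bilin_ext[of F] unfolding lin_def by (simp add: tens_add_left tens_vscale_left)
lemma lin_bilin_ext_tens_right: "lin (\<lambda>y. bilin_ext F (tens x y))"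
  using lin_bilin_ext[of F] unfolding lin_def by (simp add: tens_add_right tens_vscale_right)

lemma bilin_ext_tens: assumes "lin2 F" shows "bilin_ext F (tens x y) = F x y"
proof -
  have l1: "lin (\<lambda>x. F x y)" for y using assms by (simp add: lin2_def)
  have l2: "lin (F x)" for x using assms by (simp add: lin2_def)
  have b: "(\<lambda>y. bilin_ext F (tens (bvec i) y)) = F (bvec i)" for i
    by (rule lin_eqI[OF lin_bilin_ext_tens_right l2]) simp
  have "(\<lambda>x. bilin_ext F (tens x y)) = (\<lambda>x. F x y)"
    by (rule lin_eqI[OF lin_bilin_ext_tens_left l1]) (metis b)
  then show ?thesis by metis
qed

lemma lin_comp: "lin f \<Longrightarrow> lin g \<Longrightarrow> lin (\<lambda>x. f (g x))"
  by (simp add: lin_def)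

lemma lin_id [simp]: "lin (\<lambda>x. x)"
  by (simp add: lin_def)

lemma lin_tens_left_comp: "lin g \<Longrightarrow> lin (\<lambda>x. tens (g x) y)"
  using lin_comp[OF lin_tens_left] .
lemma lin_tens_right_comp: "lin g \<Longrightarrow> lin (\<lambda>x. tens y (g x))"
  using lin_comp[OF lin_tens_right] .
lemma lin_bilin_ext_comp: "lin g \<Longrightarrow> lin (\<lambda>x. bilin_ext F (g x))"
  using lin_comp[OF lin_bilin_ext] .

lemma lin_bilin_ext_param:
  assumes "\<And>i j. lin (\<lambda>x. G x (bvec i) (bvec j))"
  shows "lin (\<lambda>x. bilin_ext (G x) z)"
proof -
  have a: "G (x + y) (bvec i) (bvec j) = G x (bvec i) (bvec j) + G y (bvec i) (bvec j)" for x y i j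
    using assms[of i j] by (simp add: lin_def)
  have b: "G (vscale c x) (bvec i) (bvec j) = vscale c (G x (bvec i) (bvec j))" for c x i j
    using assms[of i j] by (simp add: lin_def)
  show ?thesis
    unfolding lin_def bilin_ext_def
    by (simp add: a b vscale_add_right sum.distrib vscale_sum mult.commute)
qed

lemmas lin_closure_simps = lin_tens_left_comp lin_tens_right_comp lin_bilin_ext_comp lin_bilin_ext_param lin2_def

lemma bilin_ext_bilin_ext: "bilin_ext F (bilin_ext G z) = bilin_ext (\<lambda>x y. bilin_ext F (G x y)) z"
  by (rule lin_bilin_ext_commute[OF lin_bilin_ext])
lemma tens_bilin_ext_left: "tens (bilin_ext G z) = (\<lambda>y. bilin_ext (\<lambda>u v. tens (G u v) y) z)"
  by (rule ext, rule lin_bilin_ext_commute[OF lin_tens_left])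
lemma tens_bilin_ext_right: "tens x (bilin_ext G z) = bilin_ext (\<lambda>u v. tens x (G u v)) z"
  by (rule lin_bilin_ext_commute[OF lin_tens_right])

lemmas bilin_ext_commute_simps = bilin_ext_bilin_ext tens_bilin_ext_left tens_bilin_ext_right

lemma lin_inv: assumes "lin f" "bij f" shows "lin (inv f)"
proof -
  have fi: "f (inv f x) = x" for x using assms(2) by (simp add: bij_is_surj surj_f_inv_f)
  have if': "inv f (f x) = x" for x using assms(2) by (simp add: bij_is_inj)
  show ?thesis unfolding lin_def
    by (metis fi if' lin_add[OF assms(1)] lin_vscale[OF assms(1)])
qed

lemma lin_eqI_tens2: "lin f \<Longrightarrow> lin g \<Longrightarrow> (\<And>i j. f (tens (bvec i) (bvec j)) = g (tens (bvec i) (bvec j))) \<Longrightarrow> f = g"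
  by (rule lin_eqI) (auto simp del: tens_bvec simp: tens_bvec[symmetric])
lemma lin_eqI_tens3_left: "lin f \<Longrightarrow> lin g \<Longrightarrow> (\<And>i j k. f (tens (tens (bvec i) (bvec j)) (bvec k)) = g (tens (tens (bvec i) (bvec j)) (bvec k))) \<Longrightarrow> f = g"
  by (rule lin_eqI) (auto simp del: tens_bvec simp: tens_bvec[symmetric])
lemma lin_eqI_tens3_right: "lin f \<Longrightarrow> lin g \<Longrightarrow> (\<And>i j k. f (tens (bvec i) (tens (bvec j) (bvec k))) = g (tens (bvec i) (tens (bvec j) (bvec k)))) \<Longrightarrow> f = g"
  by (rule lin_eqI) (auto simp del: tens_bvec simp: tens_bvec[symmetric])

lemma lin_tmap: "lin (tmap f g)" by (simp add: tmap_def lin_bilin_ext)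

declare tens_bvec[simp del]

lemma lin2_eqI:
  assumes f: "lin2 f" and g: "lin2 g" and eq: "\<And>i j. f (bvec i) (bvec j) = g (bvec i) (bvec j)"
  shows "f x y = g x y"
proof -
  have "f (bvec i) = g (bvec i)" for i
    by (rule lin_eqI) (use f g eq in \<open>auto simp: lin2_def\<close>)
  then have "(\<lambda>x. f x y) = (\<lambda>x. g x y)"
    by (intro lin_eqI[of "\<lambda>x. f x y"]) (use f g in \<open>auto simp: lin2_def\<close>)
  then show ?thesis by metis
qed

lemma lin3_eqI:
  assumes f: "lin3 f" and g: "lin3 g"
    and eq: "\<And>i j k. f (bvec i) (bvec j) (bvec k) = g (bvec i) (bvec j) (bvec k)"
  shows "f x y z = g x y z"
proof -
  have "f (bvec i) y z = g (bvec i) y z" for i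
    by (rule lin2_eqI) (use f g eq in \<open>auto simp: lin2_def lin3_def\<close>)
  then have "(\<lambda>x. f x y z) = (\<lambda>x. g x y z)"
    by (intro lin_eqI[of "\<lambda>x. f x y z"]) (use f g in \<open>auto simp: lin3_def\<close>)
  then show ?thesis by metis
qed

section \<open>Iterated Hom-twisted tensor products\<close>

lemma hom_twisting_flip_R:
  assumes lin_maps: "lin muA" "lin alA" "lin muB" "lin alB"
  shows "hom_twisting muA alA muB alB flip_R"
proof -
  note simps = lin_closure_simps lin_maps[THEN lin_comp] bilin_ext_commute_simps
    lin_maps[THEN lin_bilin_ext_commute] bilin_ext_tens tmap_def asl_def asr_def flip_R_def
  have "tmap alA alB \<circ> flip_R = flip_R \<circ> tmap alB alA"
    by (rule lin_eqI_tens2) (simp_all add: simps lin_maps o_def)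
  moreover have "(\<lambda>z. flip_R (tmap alB muA (asr z))) = (\<lambda>z. tmap muA alB (asl (tmap id flip_R (asr (tmap flip_R id z)))))"
    by (rule lin_eqI_tens3_left) (simp_all add: simps lin_maps)
  moreover have "(\<lambda>z. flip_R (tmap muB alA (asl z))) = (\<lambda>z. tmap alA muB (asr (tmap flip_R id (asl (tmap id flip_R z)))))"
    by (rule lin_eqI_tens3_right) (simp_all add: simps lin_maps)
  ultimately show ?thesis
    unfolding hom_twisting_def by (metis comp_apply flip_R_def lin_bilin_ext)
qed

locale twisting =
  fixes muA :: "(('a \<times> 'a) \<Rightarrow>\<^sub>0 'k::field) \<Rightarrow> ('a \<Rightarrow>\<^sub>0 'k)" and alA
    and muB :: "(('b \<times> 'b) \<Rightarrow>\<^sub>0 'k) \<Rightarrow> ('b \<Rightarrow>\<^sub>0 'k)" and alB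
    and R :: "(('b \<times> 'a) \<Rightarrow>\<^sub>0 'k) \<Rightarrow> (('a \<times> 'b) \<Rightarrow>\<^sub>0 'k)"
  assumes lin_muA: "lin muA" and lin_alA: "lin alA" and lin_muB: "lin muB" and lin_alB: "lin alB"
    and twisting: "hom_twisting muA alA muB alB R"
begin

lemma lin_structure_maps: "lin muA" "lin alA" "lin muB" "lin alB" "lin R"
  using lin_muA lin_alA lin_muB lin_alB twisting by (auto simp: hom_twisting_def)

text \<open>Rewrites a term to nested \<open>bilin_ext\<close> sums over images of basis vectors, with all
  linear maps pushed inside; with \<open>lin_eqI\<close> this turns identities of linear maps into identities
  of such sums.\<close>
lemmas expand_simps = lin_closure_simps lin_structure_maps[THEN lin_comp] bilin_ext_commute_simps
  lin_structure_maps[THEN lin_bilin_ext_commute] bilin_ext_tens tmap_def asl_def asr_def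

lemma alpha_tens: "R (tens (alB b) (alA a)) = bilin_ext (\<lambda>s t. tens (alA s) (alB t)) (R (tens b a))"
proof -
  have "tmap alA alB (R (tens b a)) = R (tmap alB alA (tens b a))"
    using twisting by (simp add: hom_twisting_def)
  then show ?thesis by (simp add: expand_simps)
qed

lemma tens_mult_right: "R (tens (alB b) (muA (tens a a'))) =
  bilin_ext (\<lambda>s t. bilin_ext (\<lambda>s2 t2. tens (muA (tens s s2)) (alB t2)) (R (tens t a'))) (R (tens b a))"
proof -
  have "R (tmap alB muA (asr (tens (tens b a) a'))) = tmap muA alB (asl (tmap id R (asr (tmap R id (tens (tens b a) a')))))"
    using twisting by (simp add: hom_twisting_def)
  then show ?thesis by (simp add: expand_simps)
qed

lemma mult_tens_left: "R (tens (muB (tens b b')) (alA a)) =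
  bilin_ext (\<lambda>u v. bilin_ext (\<lambda>s t. tens (alA s) (muB (tens t v))) (R (tens b u))) (R (tens b' a))"
proof -
  have "R (tmap muB alA (asl (tens b (tens b' a)))) = tmap alA muB (asr (tmap R id (asl (tmap id R (tens b (tens b' a))))))"
    using twisting by (simp add: hom_twisting_def)
  then show ?thesis by (simp add: expand_simps)
qed

end

locale twisted_triple =
  fixes muA :: "(('a \<times> 'a) \<Rightarrow>\<^sub>0 'k::field) \<Rightarrow> ('a \<Rightarrow>\<^sub>0 'k)" and alA
    and muB :: "(('b \<times> 'b) \<Rightarrow>\<^sub>0 'k) \<Rightarrow> ('b \<Rightarrow>\<^sub>0 'k)" and alB
    and muC :: "(('c \<times> 'c) \<Rightarrow>\<^sub>0 'k) \<Rightarrow> ('c \<Rightarrow>\<^sub>0 'k)" and alC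
    and R1 :: "(('b \<times> 'a) \<Rightarrow>\<^sub>0 'k) \<Rightarrow> (('a \<times> 'b) \<Rightarrow>\<^sub>0 'k)"
    and R2 :: "(('c \<times> 'b) \<Rightarrow>\<^sub>0 'k) \<Rightarrow> (('b \<times> 'c) \<Rightarrow>\<^sub>0 'k)"
  assumes hA: "hom_assoc muA alA" and hB: "hom_assoc muB alB" and hC: "hom_assoc muC alC"
    and t1: "hom_twisting muA alA muB alB R1" and t2: "hom_twisting muB alB muC alC R2"
    and braid: "\<And>t :: (('c \<times> ('b \<times> 'a)) \<Rightarrow>\<^sub>0 'k).
          tmap id R2 (asr (tmap flip_R id (asl (tmap id R1 t))))
        = asr (tmap R1 id (asl (tmap id flip_R (asr (tmap R2 id (asl t))))))"
begin

sublocale T1: twisting muA alA muB alB R1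
  using hA hB t1 by unfold_locales (auto simp: hom_assoc_def)

sublocale T2: twisting muB alB muC alC R2
  using hB hC t2 by unfold_locales (auto simp: hom_assoc_def)

lemma lin_structure_maps: "lin muA" "lin alA" "lin muB" "lin alB" "lin muC" "lin alC" "lin R1" "lin R2"
  using T1.lin_structure_maps T2.lin_structure_maps by auto

lemmas expand_simps = lin_closure_simps lin_structure_maps[THEN lin_comp] bilin_ext_commute_simps
  lin_structure_maps[THEN lin_bilin_ext_commute] bilin_ext_tens tmap_def asl_def asr_def

lemma assoc_A: "muA (tens (alA x) (muA (tens y z))) = muA (tens (muA (tens x y)) (alA z))"
   and alpha_mult_A: "alA (muA (tens x y)) = muA (tens (alA x) (alA y))" using hA by (auto simp: hom_assoc_def)
lemma assoc_B: "muB (tens (alB x) (muB (tens y z))) = muB (tens (muB (tens x y)) (alB z))"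
   and alpha_mult_B: "alB (muB (tens x y)) = muB (tens (alB x) (alB y))" using hB by (auto simp: hom_assoc_def)
lemma assoc_C: "muC (tens (alC x) (muC (tens y z))) = muC (tens (muC (tens x y)) (alC z))"
   and alpha_mult_C: "alC (muC (tens x y)) = muC (tens (alC x) (alC y))" using hC by (auto simp: hom_assoc_def)

lemmas twisting_simps = T1.alpha_tens T2.alpha_tens T1.tens_mult_right T2.tens_mult_right
  T1.mult_tens_left T2.mult_tens_left

lemma braid_bilin_ext: assumes "lin3 G"
  shows "bilin_ext (\<lambda>s t. bilin_ext (\<lambda>p q. G s p q) (R2 (tens c t))) (R1 (tens b a))
       = bilin_ext (\<lambda>p q. bilin_ext (\<lambda>x y. G x y q) (R1 (tens p a))) (R2 (tens c b))"
proof -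
  have g1: "lin (\<lambda>x. G x y z)" and g2: "lin (\<lambda>y. G x y z)" and g3: "lin (G x y)" for x y z
    using assms by (auto simp: lin3_def)
  define T where "T = tri_ext G"
  have "T (tmap id R2 (asr (tmap flip_R id (asl (tmap id R1 (tens c (tens b a)))))))
        = T (asr (tmap R1 id (asl (tmap id flip_R (asr (tmap R2 id (asl (tens c (tens b a)))))))))"
    by (simp only: braid)
  then show ?thesis
    unfolding T_def tri_ext_def by (simp add: expand_simps g1 g2 g3 flip_R_def)
qed

abbreviation "mult3 \<equiv> iter_twisted_mult muA muB muC R1 R2 flip_R"
abbreviation "alpha3 \<equiv> tmap alA (tmap alB alC)"

lemma iter_mult_assoc_bvec: "mult3 (tens (alpha3 (bvec (a,b,c))) (mult3 (tens (bvec (a',b',c')) (bvec (a'',b'',c''))))) = 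
   mult3 (tens (mult3 (tens (bvec (a,b,c)) (bvec (a',b',c')))) (alpha3 (bvec (a'',b'',c''))))"
proof -
  \<comment> \<open>F is the summand common to both expansions; the chain below only reorders summations,
    except for the single use of the braid relation.\<close>
  define F where "F = (\<lambda>s1 s2 t2 y1 p2 q2 v. tens (muA (tens (muA (tens (bvec a) s1)) (alA s2))) (tens (muB (tens (muB (tens t2 y1)) (alB p2))) (muC (tens (muC (tens q2 v)) (alC (bvec c''))))))"
  define G where "G = (\<lambda>s1 t1 s' p1 q1. bilin_ext (\<lambda>u' v'. bilin_ext (\<lambda>s2 t2. bilin_ext (\<lambda>p2 q2. F s1 s2 t2 p1 p2 q2 v') (R2 (tens q1 u'))) (R1 (tens t1 s'))) (R2 (tens (bvec c') (bvec b''))))"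
  have eqL: "mult3 (tens (alpha3 (bvec (a,b,c))) (mult3 (tens (bvec (a',b',c')) (bvec (a'',b'',c''))))) =
    bilin_ext (\<lambda>s' t'. bilin_ext (\<lambda>u' v'. bilin_ext (\<lambda>s1 t1. bilin_ext (\<lambda>s2 t2. bilin_ext (\<lambda>p1 q1. bilin_ext (\<lambda>p2 q2. F s1 s2 t2 p1 p2 q2 v') (R2 (tens q1 u'))) (R2 (tens (bvec c) t'))) (R1 (tens t1 s'))) (R1 (tens (bvec b) (bvec a')))) (R2 (tens (bvec c') (bvec b'')))) (R1 (tens (bvec b') (bvec a'')))"
    by (simp add: expand_simps iter_twisted_mult_def tri_ext_def flip_R_def twisting_simps assoc_A assoc_B assoc_C F_def)
  have eqR: "mult3 (tens (mult3 (tens (bvec (a,b,c)) (bvec (a',b',c')))) (alpha3 (bvec (a'',b'',c'')))) =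
    bilin_ext (\<lambda>s1 t1. bilin_ext (\<lambda>p q. bilin_ext (\<lambda>x1 y1. bilin_ext (\<lambda>x2 y2. bilin_ext (\<lambda>z1 w1. bilin_ext (\<lambda>z2 w2. F s1 x2 y2 y1 z2 w2 w1) (R2 (tens q z1))) (R2 (tens (bvec c') (bvec b'')))) (R1 (tens t1 x1))) (R1 (tens p (bvec a'')))) (R2 (tens (bvec c) (bvec b')))) (R1 (tens (bvec b) (bvec a')))"
    by (simp add: expand_simps iter_twisted_mult_def tri_ext_def flip_R_def twisting_simps assoc_A assoc_B assoc_C F_def)
  have "bilin_ext (\<lambda>s' t'. bilin_ext (\<lambda>u' v'. bilin_ext (\<lambda>s1 t1. bilin_ext (\<lambda>s2 t2. bilin_ext (\<lambda>p1 q1. bilin_ext (\<lambda>p2 q2. F s1 s2 t2 p1 p2 q2 v') (R2 (tens q1 u'))) (R2 (tens (bvec c) t'))) (R1 (tens t1 s'))) (R1 (tens (bvec b) (bvec a')))) (R2 (tens (bvec c') (bvec b'')))) (R1 (tens (bvec b') (bvec a'')))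
     = bilin_ext (\<lambda>s' t'. bilin_ext (\<lambda>s1 t1. bilin_ext (\<lambda>u' v'. bilin_ext (\<lambda>s2 t2. bilin_ext (\<lambda>p1 q1. bilin_ext (\<lambda>p2 q2. F s1 s2 t2 p1 p2 q2 v') (R2 (tens q1 u'))) (R2 (tens (bvec c) t'))) (R1 (tens t1 s'))) (R2 (tens (bvec c') (bvec b'')))) (R1 (tens (bvec b) (bvec a')))) (R1 (tens (bvec b') (bvec a'')))"
    by (rule bilin_ext_cong, rule bilin_ext_swap)
  also have "\<dots> = bilin_ext (\<lambda>s1 t1. bilin_ext (\<lambda>s' t'. bilin_ext (\<lambda>u' v'. bilin_ext (\<lambda>s2 t2. bilin_ext (\<lambda>p1 q1. bilin_ext (\<lambda>p2 q2. F s1 s2 t2 p1 p2 q2 v') (R2 (tens q1 u'))) (R2 (tens (bvec c) t'))) (R1 (tens t1 s'))) (R2 (tens (bvec c') (bvec b'')))) (R1 (tens (bvec b') (bvec a'')))) (R1 (tens (bvec b) (bvec a')))"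
    by (rule bilin_ext_swap)
  also have "\<dots> = bilin_ext (\<lambda>s1 t1. bilin_ext (\<lambda>s' t'. bilin_ext (\<lambda>u' v'. bilin_ext (\<lambda>p1 q1. bilin_ext (\<lambda>s2 t2. bilin_ext (\<lambda>p2 q2. F s1 s2 t2 p1 p2 q2 v') (R2 (tens q1 u'))) (R1 (tens t1 s'))) (R2 (tens (bvec c) t'))) (R2 (tens (bvec c') (bvec b'')))) (R1 (tens (bvec b') (bvec a'')))) (R1 (tens (bvec b) (bvec a')))"
    by (rule bilin_ext_cong, rule bilin_ext_cong, rule bilin_ext_cong, rule bilin_ext_swap)
  also have "\<dots> = bilin_ext (\<lambda>s1 t1. bilin_ext (\<lambda>s' t'. bilin_ext (\<lambda>p1 q1. G s1 t1 s' p1 q1) (R2 (tens (bvec c) t'))) (R1 (tens (bvec b') (bvec a'')))) (R1 (tens (bvec b) (bvec a')))"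
    unfolding G_def by (rule bilin_ext_cong, rule bilin_ext_cong, rule bilin_ext_swap)
  also have "\<dots> = bilin_ext (\<lambda>s1 t1. bilin_ext (\<lambda>p q. bilin_ext (\<lambda>x1 y1. G s1 t1 x1 y1 q) (R1 (tens p (bvec a'')))) (R2 (tens (bvec c) (bvec b')))) (R1 (tens (bvec b) (bvec a')))"
  proof (rule bilin_ext_cong)
    fix i j
    have l3: "lin3 (G (bvec i) (bvec j))"
      unfolding lin3_def G_def F_def by (simp add: expand_simps)
    show "bilin_ext (\<lambda>s' t'. bilin_ext (\<lambda>p1 q1. G (bvec i) (bvec j) s' p1 q1) (R2 (tens (bvec c) t'))) (R1 (tens (bvec b') (bvec a''))) =
          bilin_ext (\<lambda>p q. bilin_ext (\<lambda>x1 y1. G (bvec i) (bvec j) x1 y1 q) (R1 (tens p (bvec a'')))) (R2 (tens (bvec c) (bvec b')))"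
      by (rule braid_bilin_ext[OF l3])
  qed
  also have "\<dots> = bilin_ext (\<lambda>s1 t1. bilin_ext (\<lambda>p q. bilin_ext (\<lambda>x1 y1. bilin_ext (\<lambda>x2 y2. bilin_ext (\<lambda>z1 w1. bilin_ext (\<lambda>z2 w2. F s1 x2 y2 y1 z2 w2 w1) (R2 (tens q z1))) (R2 (tens (bvec c') (bvec b'')))) (R1 (tens t1 x1))) (R1 (tens p (bvec a'')))) (R2 (tens (bvec c) (bvec b')))) (R1 (tens (bvec b) (bvec a')))"
    unfolding G_def by (rule bilin_ext_cong, rule bilin_ext_cong, rule bilin_ext_cong, rule bilin_ext_swap)
  finally show ?thesis using eqL eqR by simp
qed

lemma iter_mult_alpha_bvec: "alpha3 (mult3 (tens (bvec (a,b,c)) (bvec (a',b',c')))) = mult3 (tens (alpha3 (bvec (a,b,c))) (alpha3 (bvec (a',b',c'))))"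
  by (simp add: expand_simps iter_twisted_mult_def tri_ext_def flip_R_def twisting_simps alpha_mult_A alpha_mult_B alpha_mult_C)

theorem hom_assoc_iter_twisted_mult: "hom_assoc mult3 alpha3"
proof -
  have lM: "lin mult3" by (simp add: iter_twisted_mult_def lin_bilin_ext)
  have la: "lin alpha3" by (simp add: lin_tmap)
  have m: "alpha3 (mult3 (tens x y)) = mult3 (tens (alpha3 x) (alpha3 y))" for x y
  proof (rule lin2_eqI[where f="\<lambda>x y. alpha3 (mult3 (tens x y))" and g="\<lambda>x y. mult3 (tens (alpha3 x) (alpha3 y))"])
    fix i j :: "'a \<times> 'b \<times> 'c"
    obtain a b c where i: "i = (a,b,c)" by (cases i) auto
    obtain a' b' c' where j: "j = (a',b',c')" by (cases j) auto
    show "alpha3 (mult3 (tens (bvec i) (bvec j))) = mult3 (tens (alpha3 (bvec i)) (alpha3 (bvec j)))"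
      unfolding i j by (rule iter_mult_alpha_bvec)
  qed (simp_all add: expand_simps iter_twisted_mult_def tri_ext_def)
  have as: "mult3 (tens (alpha3 x) (mult3 (tens y z))) = mult3 (tens (mult3 (tens x y)) (alpha3 z))" for x y z
  proof (rule lin3_eqI[where f="\<lambda>x y z. mult3 (tens (alpha3 x) (mult3 (tens y z)))" and g="\<lambda>x y z. mult3 (tens (mult3 (tens x y)) (alpha3 z))"])
    fix i j k :: "'a \<times> 'b \<times> 'c"
    obtain a b c where i: "i = (a,b,c)" by (cases i) auto
    obtain a' b' c' where j: "j = (a',b',c')" by (cases j) auto
    obtain a'' b'' c'' where k: "k = (a'',b'',c'')" by (cases k) auto
    show "mult3 (tens (alpha3 (bvec i)) (mult3 (tens (bvec j) (bvec k)))) = mult3 (tens (mult3 (tens (bvec i) (bvec j))) (alpha3 (bvec k)))"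
      unfolding i j k by (rule iter_mult_assoc_bvec)
  qed (simp_all add: expand_simps lin3_def iter_twisted_mult_def tri_ext_def)
  show ?thesis unfolding hom_assoc_def using lM la m as by blast
qed

end

section \<open>The two-sided Hom-smash product\<close>

locale smash_setting =
  fixes muH :: "(('h \<times> 'h) \<Rightarrow>\<^sub>0 'k::field) \<Rightarrow> ('h \<Rightarrow>\<^sub>0 'k)"
    and DeltaH :: "('h \<Rightarrow>\<^sub>0 'k) \<Rightarrow> (('h \<times> 'h) \<Rightarrow>\<^sub>0 'k)"
    and alH :: "('h \<Rightarrow>\<^sub>0 'k) \<Rightarrow> ('h \<Rightarrow>\<^sub>0 'k)"
    and muA :: "(('a \<times> 'a) \<Rightarrow>\<^sub>0 'k) \<Rightarrow> ('a \<Rightarrow>\<^sub>0 'k)"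
    and alA :: "('a \<Rightarrow>\<^sub>0 'k) \<Rightarrow> ('a \<Rightarrow>\<^sub>0 'k)"
    and actA :: "(('h \<times> 'a) \<Rightarrow>\<^sub>0 'k) \<Rightarrow> ('a \<Rightarrow>\<^sub>0 'k)"
    and muC :: "(('c \<times> 'c) \<Rightarrow>\<^sub>0 'k) \<Rightarrow> ('c \<Rightarrow>\<^sub>0 'k)"
    and alC :: "('c \<Rightarrow>\<^sub>0 'k) \<Rightarrow> ('c \<Rightarrow>\<^sub>0 'k)"
    and actC :: "(('c \<times> 'h) \<Rightarrow>\<^sub>0 'k) \<Rightarrow> ('c \<Rightarrow>\<^sub>0 'k)"
  assumes H: "hom_bialgebra muH DeltaH alH"
    and A: "left_module_hom_algebra muH DeltaH alH muA alA actA"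
    and C: "right_module_hom_algebra muH DeltaH alH muC alC actC"
    and bijH: "bij alH" and bijA: "bij alA" and bijC: "bij alC"
begin

abbreviation "iH \<equiv> inv alH"
abbreviation "iA \<equiv> inv alA"
abbreviation "iC \<equiv> inv alC"

lemma lin_muH: "lin muH" and lin_alH: "lin alH" and lin_Delta: "lin DeltaH"
  using H by (auto simp: hom_bialgebra_def hom_assoc_def)
lemma lin_muA: "lin muA" and lin_alA: "lin alA" and lin_actA: "lin actA"
  using A by (auto simp: left_module_hom_algebra_def hom_assoc_def)
lemma lin_muC: "lin muC" and lin_alC: "lin alC" and lin_actC: "lin actC"
  using C by (auto simp: right_module_hom_algebra_def hom_assoc_def)
lemma lin_iH: "lin iH" using lin_inv[OF lin_alH bijH] .
lemma lin_iA: "lin iA" using lin_inv[OF lin_alA bijA] .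
lemma lin_iC: "lin iC" using lin_inv[OF lin_alC bijC] .

lemma alH_iH[simp]: "alH (iH x) = x" using bijH by (simp add: bij_is_surj surj_f_inv_f)
lemma iH_alH[simp]: "iH (alH x) = x" using bijH by (simp add: bij_is_inj)
lemma alA_iA[simp]: "alA (iA x) = x" using bijA by (simp add: bij_is_surj surj_f_inv_f)
lemma iA_alA[simp]: "iA (alA x) = x" using bijA by (simp add: bij_is_inj)
lemma alC_iC[simp]: "alC (iC x) = x" using bijC by (simp add: bij_is_surj surj_f_inv_f)
lemma iC_alC[simp]: "iC (alC x) = x" using bijC by (simp add: bij_is_inj)

lemmas lin_structure_maps = lin_muH lin_alH lin_Delta lin_muA lin_alA lin_actA lin_muC lin_alC lin_actC lin_iH lin_iA lin_iC

lemmas lin_comp_structure_simps = lin_structure_maps[THEN lin_comp]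
lemmas structure_bilin_ext_commute = lin_structure_maps[THEN lin_bilin_ext_commute]

lemmas expand_simps = lin_closure_simps lin_comp_structure_simps bilin_ext_commute_simps structure_bilin_ext_commute bilin_ext_tens tmap_def asl_def asr_def

lemma alH_mult: "alH (muH (tens x y)) = muH (tens (alH x) (alH y))"
  and coassoc: "bilin_ext (\<lambda>h1 h2. tens (DeltaH h1) (alH h2)) (DeltaH h)
          = asl (bilin_ext (\<lambda>h1 h2. tens (alH h1) (DeltaH h2)) (DeltaH h))"
  and Delta_mult: "DeltaH (muH (tens h h')) =
          bilin_ext (\<lambda>h1 h2. bilin_ext (\<lambda>h1' h2'. tens (muH (tens h1 h1')) (muH (tens h2 h2'))) (DeltaH h')) (DeltaH h)"
  and Delta_alpha: "DeltaH (alH h) = bilin_ext (\<lambda>h1 h2. tens (alH h1) (alH h2)) (DeltaH h)"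
  using H unfolding hom_bialgebra_def hom_assoc_def by blast+

lemma alA_mult: "alA (muA (tens x y)) = muA (tens (alA x) (alA y))"
  and actA_al: "alA (actA (tens h a)) = actA (tens (alH h) (alA a))"
  and actA_act: "actA (tens (alH h) (actA (tens h' a))) = actA (tens (muH (tens h h')) (alA a))"
  and actA_mu: "actA (tens (alH (alH h)) (muA (tens a a')))
          = bilin_ext (\<lambda>h1 h2. muA (tens (actA (tens h1 a)) (actA (tens h2 a')))) (DeltaH h)"
  using A unfolding left_module_hom_algebra_def hom_assoc_def by blast+

lemma alC_mult: "alC (muC (tens x y)) = muC (tens (alC x) (alC y))"
  and actC_al: "alC (actC (tens c h)) = actC (tens (alC c) (alH h))"
  and actC_act: "actC (tens (actC (tens c h)) (alH h')) = actC (tens (alC c) (muH (tens h h')))"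
  and actC_mu: "actC (tens (muC (tens c c')) (alH (alH h)))
          = bilin_ext (\<lambda>h1 h2. muC (tens (actC (tens c h1)) (actC (tens c' h2)))) (DeltaH h)"
  using C unfolding right_module_hom_algebra_def hom_assoc_def by blast+

lemma inv_alH_mult: "iH (muH (tens x y)) = muH (tens (iH x) (iH y))"
  by (metis alH_mult alH_iH iH_alH)
lemma inv_alA_mult: "iA (muA (tens x y)) = muA (tens (iA x) (iA y))"
  by (metis alA_mult alA_iA iA_alA)
lemma inv_alC_mult: "iC (muC (tens x y)) = muC (tens (iC x) (iC y))"
  by (metis alC_mult alC_iC iC_alC)

lemma Delta_alpha_bilin_ext: assumes "lin2 F"
  shows "bilin_ext F (DeltaH (alH h)) = bilin_ext (\<lambda>x y. F (alH x) (alH y)) (DeltaH h)"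
  using assms by (simp add: Delta_alpha expand_simps)

lemma Delta_inv_bilin_ext: assumes "lin2 F"
  shows "bilin_ext F (DeltaH (iH h)) = bilin_ext (\<lambda>x y. F (iH x) (iH y)) (DeltaH h)"
proof -
  have a: "lin (\<lambda>x. F x y)" "lin (F x)" for x y using assms by (auto simp: lin2_def)
  have l: "lin2 (\<lambda>x y. F (iH x) (iH y))"
    unfolding lin2_def using lin_comp[OF a(1) lin_iH] lin_comp[OF a(2) lin_iH] by auto
  have "bilin_ext (\<lambda>x y. F (iH x) (iH y)) (DeltaH h) = bilin_ext (\<lambda>x y. F (iH x) (iH y)) (DeltaH (alH (iH h)))"
    by simp
  also have "\<dots> = bilin_ext F (DeltaH (iH h))"
    using Delta_alpha_bilin_ext[OF l, of "iH h"] by simp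
  finally show ?thesis by simp
qed

lemma Delta_mult_bilin_ext: assumes "lin2 F"
  shows "bilin_ext F (DeltaH (muH (tens h h'))) = 
    bilin_ext (\<lambda>h1 h2. bilin_ext (\<lambda>h1' h2'. F (muH (tens h1 h1')) (muH (tens h2 h2'))) (DeltaH h')) (DeltaH h)"
  using assms by (simp add: Delta_mult expand_simps)

lemma coassoc_bilin_ext: assumes "lin3 G"
  shows "bilin_ext (\<lambda>x y. bilin_ext (\<lambda>u v. G u v (alH y)) (DeltaH x)) (DeltaH h)
       = bilin_ext (\<lambda>x y. bilin_ext (\<lambda>u v. G (alH x) u v) (DeltaH y)) (DeltaH h)"
proof -
  have g1: "lin (\<lambda>x. G x y z)" and g2: "lin (\<lambda>y. G x y z)" and g3: "lin (G x y)" for x y z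
    using assms by (auto simp: lin3_def)
  define T where "T = bilin_ext (\<lambda>p z. bilin_ext (\<lambda>x y. G x y z) p)"
  have "T (bilin_ext (\<lambda>h1 h2. tens (DeltaH h1) (alH h2)) (DeltaH h))
     = T (asl (bilin_ext (\<lambda>h1 h2. tens (alH h1) (DeltaH h2)) (DeltaH h)))"
    by (simp only: coassoc)
  then show ?thesis
    unfolding T_def by (simp add: expand_simps g1 g2 g3)
qed

abbreviation "R1 \<equiv> smash_R1 DeltaH alH alA actA"
abbreviation "R2 \<equiv> smash_R2 DeltaH alH alC actC"

lemma actA_inv_mult: "actA (tens (iH h) (muA (tens a a'))) = 
  bilin_ext (\<lambda>u v. muA (tens (actA (tens (iH (iH (iH u))) a)) (actA (tens (iH (iH (iH v))) a')))) (DeltaH h)"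
  using actA_mu[of "iH (iH (iH h))" a a'] by (simp add: Delta_inv_bilin_ext expand_simps)

lemma smash_R1_alpha: "tmap alA alH (R1 z) = R1 (tmap alH alA z)"
proof -
  have "tmap alA alH \<circ> R1 = R1 \<circ> tmap alH alA"
    by (rule lin_eqI_tens2)
      (auto simp: o_def expand_simps smash_R1_def Delta_alpha_bilin_ext actA_al simp del: tens_bvec)
  then show ?thesis by (metis comp_apply)
qed

lemma smash_R1_mult_right: "R1 (tmap alH muA (asr z)) = tmap muA alH (asl (tmap id R1 (asr (tmap R1 id z))))"
proof -
  have lin3_summand: "lin3 (\<lambda>u v w. tens (muA (tens (actA (tens (iH (iH (iH u))) (iA a))) (actA (tens (iH (iH (iH v))) (iA a'))))) (iH w))" for a a'
    by (simp add: lin3_def expand_simps)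
  have "(\<lambda>z. R1 (tmap alH muA (asr z))) = (\<lambda>z. tmap muA alH (asl (tmap id R1 (asr (tmap R1 id z)))))"
  proof (rule lin_eqI_tens3_left)
    fix i j k
    show "R1 (tmap alH muA (asr (tens (tens (bvec i) (bvec j)) (bvec k)))) = tmap muA alH (asl (tmap id R1 (asr (tmap R1 id (tens (tens (bvec i) (bvec j)) (bvec k))))))"
      using coassoc_bilin_ext[OF lin3_summand, of "bvec j" "bvec k" "bvec i"]
      by (simp add: expand_simps smash_R1_def Delta_alpha_bilin_ext Delta_inv_bilin_ext actA_al inv_alA_mult actA_inv_mult del: tens_bvec)
  qed (simp_all add: expand_simps smash_R1_def lin_structure_maps)
  then show ?thesis by metis
qed

lemma inv_alA_actA: "iA (actA (tens h a)) = actA (tens (iH h) (iA a))"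
  by (metis actA_al alA_iA iA_alA alH_iH)
lemma actA_act_left: "actA (tens x (actA (tens y a))) = actA (tens (muH (tens (iH x) y)) (alA a))"
  using actA_act[of "iH x" y a] by simp
lemma inv_alC_actC: "iC (actC (tens c h)) = actC (tens (iC c) (iH h))"
  by (metis actC_al alC_iC iC_alC alH_iH)
lemma actC_act_right: "actC (tens (actC (tens c h)) y) = actC (tens (alC c) (muH (tens h (iH y))))"
  using actC_act[of c h "iH y"] by simp
lemma actC_inv_mult: "actC (tens (muC (tens c c')) (iH h)) = 
  bilin_ext (\<lambda>u v. muC (tens (actC (tens c (iH (iH (iH u))))) (actC (tens c' (iH (iH (iH v))))))) (DeltaH h)"
  using actC_mu[of c c' "iH (iH (iH h))"] by (simp add: Delta_inv_bilin_ext expand_simps)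

lemmas smash_simps = expand_simps smash_R1_def smash_R2_def Delta_alpha_bilin_ext Delta_inv_bilin_ext Delta_mult_bilin_ext actA_al inv_alA_mult inv_alH_mult inv_alC_mult actA_inv_mult actC_inv_mult
  inv_alA_actA actA_act_left inv_alC_actC actC_act_right actC_al alH_mult

lemma smash_R1_mult_left: "R1 (tmap muH alA (asl z)) = tmap alA muH (asr (tmap R1 id (asl (tmap id R1 z))))"
proof -
  have "(\<lambda>z. R1 (tmap muH alA (asl z))) = (\<lambda>z. tmap alA muH (asr (tmap R1 id (asl (tmap id R1 z)))))"
  proof (rule lin_eqI_tens3_right)
    fix i j k
    show "R1 (tmap muH alA (asl (tens (bvec i) (tens (bvec j) (bvec k))))) = tmap alA muH (asr (tmap R1 id (asl (tmap id R1 (tens (bvec i) (tens (bvec j) (bvec k)))))))"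
      by (simp add: smash_simps) (rule bilin_ext_swap)
  qed (simp_all add: smash_simps lin_structure_maps)
  then show ?thesis by metis
qed

lemma smash_R2_alpha: "tmap alH alC (R2 z) = R2 (tmap alC alH z)"
proof -
  have "tmap alH alC \<circ> R2 = R2 \<circ> tmap alC alH"
    by (rule lin_eqI_tens2) (auto simp: o_def smash_simps)
  then show ?thesis by (metis comp_apply)
qed

lemma smash_R2_mult_right: "R2 (tmap alC muH (asr z)) = tmap muH alC (asl (tmap id R2 (asr (tmap R2 id z))))"
proof -
  have "(\<lambda>z. R2 (tmap alC muH (asr z))) = (\<lambda>z. tmap muH alC (asl (tmap id R2 (asr (tmap R2 id z)))))"
  proof (rule lin_eqI_tens3_left)
    fix i j k
    show "R2 (tmap alC muH (asr (tens (tens (bvec i) (bvec j)) (bvec k)))) = tmap muH alC (asl (tmap id R2 (asr (tmap R2 id (tens (tens (bvec i) (bvec j)) (bvec k))))))"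
      by (simp add: smash_simps)
  qed (simp_all add: smash_simps lin_structure_maps)
  then show ?thesis by metis
qed

lemma smash_R2_mult_left: "R2 (tmap muC alH (asl z)) = tmap alH muC (asr (tmap R2 id (asl (tmap id R2 z))))"
proof -
  have lin3_summand: "lin3 (\<lambda>u v w. tens (iH u) (muC (tens (actC (tens (iC c) (iH (iH (iH v))))) (actC (tens (iC c') (iH (iH (iH w))))))))" for c c'
    by (simp add: lin3_def expand_simps)
  have "(\<lambda>z. R2 (tmap muC alH (asl z))) = (\<lambda>z. tmap alH muC (asr (tmap R2 id (asl (tmap id R2 z)))))"
  proof (rule lin_eqI_tens3_right)
    fix i j k
    show "R2 (tmap muC alH (asl (tens (bvec i) (tens (bvec j) (bvec k))))) = tmap alH muC (asr (tmap R2 id (asl (tmap id R2 (tens (bvec i) (tens (bvec j) (bvec k)))))))"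
      using coassoc_bilin_ext[OF lin3_summand, of "bvec i" "bvec j" "bvec k"] by (simp add: smash_simps)
  qed (simp_all add: smash_simps lin_structure_maps)
  then show ?thesis by metis
qed

lemma smash_braid: "tmap id R2 (asr (tmap flip_R id (asl (tmap id R1 t))))
        = asr (tmap R1 id (asl (tmap id flip_R (asr (tmap R2 id (asl t))))))"
proof -
  have lin3_summand: "lin3 (\<lambda>u v w. tens (actA (tens (iH (iH (iH u))) (iA a))) (tens (iH (iH v)) (actC (tens (iC c) (iH (iH (iH w)))))))" for a c
    by (simp add: lin3_def expand_simps)
  have "(\<lambda>t. tmap id R2 (asr (tmap flip_R id (asl (tmap id R1 t))))) = (\<lambda>t. asr (tmap R1 id (asl (tmap id flip_R (asr (tmap R2 id (asl t)))))))"
  proof (rule lin_eqI_tens3_right)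
    fix i j k
    show "tmap id R2 (asr (tmap flip_R id (asl (tmap id R1 (tens (bvec i) (tens (bvec j) (bvec k))))))) = asr (tmap R1 id (asl (tmap id flip_R (asr (tmap R2 id (asl (tens (bvec i) (tens (bvec j) (bvec k)))))))))"
      using coassoc_bilin_ext[OF lin3_summand, of "bvec k" "bvec i" "bvec j"] by (simp add: smash_simps flip_R_def)
  qed (simp_all add: smash_simps lin_structure_maps flip_R_def)
  then show ?thesis by metis
qed

lemma iter_twisted_mult_eq_two_sided_smash_mult: "iter_twisted_mult muA muH muC R1 R2 flip_R = two_sided_smash_mult muH DeltaH alH muA alA actA muC alC actC"
proof (rule lin_eqI)
  fix p :: "('a \<times> 'h \<times> 'c) \<times> ('a \<times> 'h \<times> 'c)"
  obtain a b c a' b' c' where p: "p = ((a,b,c),(a',b',c'))" by (cases p) auto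
  show "iter_twisted_mult muA muH muC R1 R2 flip_R (bvec p) = two_sided_smash_mult muH DeltaH alH muA alA actA muC alC actC (bvec p)"
    unfolding p by (simp add: smash_simps flip_R_def iter_twisted_mult_def two_sided_smash_mult_def tri_ext_def)
qed (simp_all add: iter_twisted_mult_def two_sided_smash_mult_def lin_bilin_ext)


lemma hom_twisting_smash_R1: "hom_twisting muA alA muH alH R1"
  unfolding hom_twisting_def
  using smash_R1_alpha smash_R1_mult_right smash_R1_mult_left by (simp add: smash_R1_def lin_bilin_ext)

lemma hom_twisting_smash_R2: "hom_twisting muH alH muC alC R2"
  unfolding hom_twisting_def
  using smash_R2_alpha smash_R2_mult_right smash_R2_mult_left by (simp add: smash_R2_def lin_bilin_ext)

lemma twisted_triple_smash: "twisted_triple muA alA muH alH muC alC R1 R2"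
proof
  show "hom_assoc muA alA" using A by (simp add: left_module_hom_algebra_def)
  show "hom_assoc muH alH" using H by (simp add: hom_bialgebra_def)
  show "hom_assoc muC alC" using C by (simp add: right_module_hom_algebra_def)
qed (simp_all add: hom_twisting_smash_R1 hom_twisting_smash_R2 smash_braid)
end

theorem proposition3p16:
  fixes muH :: "(('h \<times> 'h) \<Rightarrow>\<^sub>0 'k::field) \<Rightarrow> ('h \<Rightarrow>\<^sub>0 'k)"
    and DeltaH :: "('h \<Rightarrow>\<^sub>0 'k) \<Rightarrow> (('h \<times> 'h) \<Rightarrow>\<^sub>0 'k)"
    and alH :: "('h \<Rightarrow>\<^sub>0 'k) \<Rightarrow> ('h \<Rightarrow>\<^sub>0 'k)"
    and muA :: "(('a \<times> 'a) \<Rightarrow>\<^sub>0 'k) \<Rightarrow> ('a \<Rightarrow>\<^sub>0 'k)"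
    and alA :: "('a \<Rightarrow>\<^sub>0 'k) \<Rightarrow> ('a \<Rightarrow>\<^sub>0 'k)"
    and actA :: "(('h \<times> 'a) \<Rightarrow>\<^sub>0 'k) \<Rightarrow> ('a \<Rightarrow>\<^sub>0 'k)"
    and muC :: "(('c \<times> 'c) \<Rightarrow>\<^sub>0 'k) \<Rightarrow> ('c \<Rightarrow>\<^sub>0 'k)"
    and alC :: "('c \<Rightarrow>\<^sub>0 'k) \<Rightarrow> ('c \<Rightarrow>\<^sub>0 'k)"
    and actC :: "(('c \<times> 'h) \<Rightarrow>\<^sub>0 'k) \<Rightarrow> ('c \<Rightarrow>\<^sub>0 'k)"
  assumes H: "hom_bialgebra muH DeltaH alH"
    and A: "left_module_hom_algebra muH DeltaH alH muA alA actA"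
    and C: "right_module_hom_algebra muH DeltaH alH muC alC actC"
    and bijH: "bij alH" and bijA: "bij alA" and bijC: "bij alC"
  defines "R1 \<equiv> smash_R1 DeltaH alH alA actA"
    and "R2 \<equiv> smash_R2 DeltaH alH alC actC"
    and "R3 \<equiv> (flip_R :: (('c \<times> 'a) \<Rightarrow>\<^sub>0 'k) \<Rightarrow> (('a \<times> 'c) \<Rightarrow>\<^sub>0 'k))"
  shows "hom_twisting muA alA muH alH R1 \<and> hom_twisting muH alH muC alC R2 \<and> hom_twisting muA alA muC alC R3
     \<and> (\<forall>t :: (('c \<times> ('h \<times> 'a)) \<Rightarrow>\<^sub>0 'k).
          tmap id R2 (asr (tmap R3 id (asl (tmap id R1 t))))
        = asr (tmap R1 id (asl (tmap id R3 (asr (tmap R2 id (asl t)))))))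
     \<and> hom_assoc (iter_twisted_mult muA muH muC R1 R2 R3) (tmap alA (tmap alH alC))
     \<and> iter_twisted_mult muA muH muC R1 R2 R3 = two_sided_smash_mult muH DeltaH alH muA alA actA muC alC actC"
proof -
  interpret smash_setting muH DeltaH alH muA alA actA muC alC actC
    using H A C bijH bijA bijC by unfold_locales
  show ?thesis
    unfolding R1_def R2_def R3_def
    using hom_twisting_smash_R1 hom_twisting_smash_R2 hom_twisting_flip_R[OF lin_muA lin_alA lin_muC lin_alC]
      smash_braid twisted_triple.hom_assoc_iter_twisted_mult[OF twisted_triple_smash]
      iter_twisted_mult_eq_two_sided_smash_mult
    by blast
qed

end
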